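(* Let $p\ge 1$ and let $G=(V,E)$ be a $p$-regular graph with a Hamiltonian cycle $(v_0,v_1,\dots,v_{n-1},v_0)$, $n=|V|\ge 3$. Let $G^*$ be the graph with vertex set $\{v_0,\dots,v_{n-1}\}\cup\{v_0',\dots,v_{n-1}'\}$ (the $v_i'$ new vertices) and edge set $E\cup\{\{v_i',v_j'\}\mid \{v_i,v_j\}\in E\}\cup\{\{v_i,v'_{(i+1)\bmod n}\}\mid i\in\{0,\dots,n-1\}\}$. Then $G^*$ is $(p+1)$-regular, $(v_{n-1},v_0',v_{n-1}',v_{n-2}',\dots,v_1',v_0,v_1,\dots,v_{n-2},v_{n-1})$ is a Hamiltonian cycle of $G^*$, and $G^*$ is 3-colorable if and only if $G$ is 3-colorable.
   Context: A graph $G=(V,E)$ is 3-colorable if there is a function $f\colon V\to\{1,2,3\}$ with $f(v)\neq f(w)$ for every edge $\{v,w\}\in E$. A graph is $k$-regular if every vertex has degree exactly $k$. A Hamiltonian cycle visits every vertex exactly once; the tuple $(u_0,\dots,u_{m-1},u_0)$ denotes the cycle with edges $\{u_i,u_{i+1 \bmod m}\}$. *)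

theory Defs
  imports Main
begin

definition simple_graph :: "'a set \<Rightarrow> 'a set set \<Rightarrow> bool" where
  "simple_graph V E \<longleftrightarrow> finite V \<and>
     (\<forall>e\<in>E. \<exists>v w. e = {v, w} \<and> v \<noteq> w \<and> v \<in> V \<and> w \<in> V)"

definition degree :: "'a set set \<Rightarrow> 'a \<Rightarrow> nat" where
  "degree E v = card {e \<in> E. v \<in> e}"

definition regular :: "'a set \<Rightarrow> 'a set set \<Rightarrow> nat \<Rightarrow> bool" where
  "regular V E k \<longleftrightarrow> (\<forall>v\<in>V. degree E v = k)"

text \<open>The list [u0,...,u(m-1)] denotes the cycle (u0,...,u(m-1),u0) with edges
  {u i, u ((i+1) mod m)}; it is Hamiltonian if it visits every vertex exactly once.\<close>
definition ham_cycle :: "'a set \<Rightarrow> 'a set set \<Rightarrow> 'a list \<Rightarrow> bool" where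
  "ham_cycle V E us \<longleftrightarrow> distinct us \<and> set us = V \<and>
     (\<forall>i < length us. {us ! i, us ! ((i + 1) mod length us)} \<in> E)"

definition three_colorable :: "'a set \<Rightarrow> 'a set set \<Rightarrow> bool" where
  "three_colorable V E \<longleftrightarrow> (\<exists>f :: 'a \<Rightarrow> nat. (\<forall>v\<in>V. f v \<in> {1, 2, 3}) \<and>
     (\<forall>v w. {v, w} \<in> E \<longrightarrow> f v \<noteq> f w))"

text \<open>The construction G*: original vertices v_i are Inl (vs!i), new vertices v_i' are Inr (vs!i).\<close>
definition star_vertices :: "'a list \<Rightarrow> ('a + 'a) set" where
  "star_vertices vs = Inl ` set vs \<union> Inr ` set vs"

definition star_edges :: "'a set set \<Rightarrow> 'a list \<Rightarrow> ('a + 'a) set set" where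
  "star_edges E vs = (image Inl) ` E
     \<union> {{Inr (vs ! i), Inr (vs ! j)} | i j. i < length vs \<and> j < length vs \<and> {vs ! i, vs ! j} \<in> E}
     \<union> {{Inl (vs ! i), Inr (vs ! ((i + 1) mod length vs))} | i. i < length vs}"

definition star_cycle :: "'a list \<Rightarrow> ('a + 'a) list" where
  "star_cycle vs = [Inl (vs ! (length vs - 1)), Inr (vs ! 0)]
     @ map (\<lambda>j. Inr (vs ! j)) (rev [1..<length vs])
     @ map (\<lambda>j. Inl (vs ! j)) [0..<length vs - 1]"

end

(*
  G* consists of two copies of G joined by the perfect matching v_i -- v'_(i+1), so every
  degree grows by exactly one. The new cycle walks backwards along the Hamiltonian cycle
  through the primed copy and forwards through the original one, changing copies along the
  two matching edges v_(n-1) -- v'_0 and v'_1 -- v_0. For 3-colourability, both the inclusion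
  of G into G* and the projection of G* onto G identifying v'_i with v_i are graph
  homomorphisms (the projection sends each matching edge to an edge of the Hamiltonian
  cycle), and colourings pull back along homomorphisms.
*)

theory Submission
  imports Defs
begin

lemma finite_edges_if_simple_graph: "simple_graph V E \<Longrightarrow> finite E"
proof -
  assume "simple_graph V E"
  then have "finite V" "E \<subseteq> Pow V" by (auto simp: simple_graph_def)
  then show "finite E" by (metis finite_Pow_iff finite_subset)
qed

lemma degree_Un:
  assumes "finite A" "finite B" "\<forall>e \<in> A \<inter> B. v \<notin> e"
  shows "degree (A \<union> B) v = degree A v + degree B v"
proof -
  have "{e \<in> A \<union> B. v \<in> e} = {e \<in> A. v \<in> e} \<union> {e \<in> B. v \<in> e}" by blast
  moreover have "{e \<in> A. v \<in> e} \<inter> {e \<in> B. v \<in> e} = {}" using assms(3) by blast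
  ultimately show ?thesis
    unfolding degree_def using assms(1,2) by (simp add: card_Un_disjoint)
qed

lemma degree_image_inj: "inj f \<Longrightarrow> degree ((`) f ` E) (f x) = degree E x"
proof -
  assume "inj f"
  then have "{e \<in> (`) f ` E. f x \<in> e} = (`) f ` {e \<in> E. x \<in> e}"
    by (auto simp: inj_image_mem_iff dest: injD)
  moreover have "inj_on ((`) f) A" for A using \<open>inj f\<close> by (simp add: inj_on_def inj_image_eq_iff)
  ultimately show ?thesis unfolding degree_def by (simp add: card_image)
qed

lemma degree_image_notin_range: "x \<notin> range f \<Longrightarrow> degree ((`) f ` E) x = 0"
  unfolding degree_def by (auto simp: card_eq_0_iff)

lemma degree_image_unique:
  assumes "\<exists>!k. k < n \<and> v \<in> h k"
  shows "degree (h ` {..<n}) v = 1"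
proof -
  from assms obtain k where k: "k < n" "v \<in> h k" and uniq: "\<And>l. l < n \<Longrightarrow> v \<in> h l \<Longrightarrow> l = k"
    by metis
  have "{e \<in> h ` {..<n}. v \<in> e} = {h k}"
  proof (intro equalityI subsetI)
    fix e assume "e \<in> {e \<in> h ` {..<n}. v \<in> e}"
    then obtain l where "l < n" "v \<in> h l" "e = h l" by auto
    then show "e \<in> {h k}" using uniq by simp
  qed (use k in auto)
  then show ?thesis unfolding degree_def by simp
qed

lemma mod_Suc_inj:
  fixes i j n :: nat
  assumes "i < n" "j < n" "(i + 1) mod n = (j + 1) mod n"
  shows "i = j"
  using assms by (cases "i + 1 = n"; cases "j + 1 = n") auto

lemma star_edges_eq:
  assumes "\<forall>e \<in> E. \<exists>x y. e = {x, y} \<and> x \<in> set vs \<and> y \<in> set vs"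
  shows "star_edges E vs = (`) Inl ` E \<union> (`) Inr ` E
    \<union> (\<lambda>i. {Inl (vs ! i), Inr (vs ! ((i + 1) mod length vs))}) ` {..<length vs}"
proof -
  let ?C = "{{Inr (vs ! i) :: 'a + 'a, Inr (vs ! j)} | i j. i < length vs \<and> j < length vs \<and> {vs ! i, vs ! j} \<in> E}"
  have "?C = (`) Inr ` E"
  proof (intro equalityI subsetI)
    fix e assume "e \<in> ?C"
    then obtain i j where "{vs ! i, vs ! j} \<in> E" "e = Inr ` {vs ! i, vs ! j}" by auto
    then show "e \<in> (`) Inr ` E" by blast
  next
    fix e :: "('a + 'a) set" assume "e \<in> (`) Inr ` E"
    then obtain x y where xy: "{x, y} \<in> E" "x \<in> set vs" "y \<in> set vs" "e = {Inr x, Inr y}"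
      using assms by force
    obtain i j where "i < length vs" "j < length vs" "x = vs ! i" "y = vs ! j"
      using xy(2,3) by (metis in_set_conv_nth)
    then show "e \<in> ?C" using xy by blast
  qed
  then show ?thesis unfolding star_edges_def by (simp add: setcompr_eq_image lessThan_def)
qed

lemma unique_shift_edge_Inl:
  assumes "distinct vs" "x \<in> set vs"
  shows "\<exists>!k. k < length vs \<and> Inl x \<in> {Inl (vs ! k), Inr (vs ! ((k + 1) mod length vs))}"
  using assms by (auto simp: in_set_conv_nth nth_eq_iff_index_eq)

lemma unique_shift_edge_Inr:
  assumes "distinct vs" "x \<in> set vs"
  shows "\<exists>!k. k < length vs \<and> Inr x \<in> {Inl (vs ! k), Inr (vs ! ((k + 1) mod length vs))}"
proof -
  let ?n = "length vs"
  obtain j where j: "j < ?n" "x = vs ! j"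
    using assms(2) by (metis in_set_conv_nth)
  then have "0 < ?n" "Suc (j + ?n - 1) = j + ?n" by linarith+
  then obtain i where i: "i < ?n" "(i + 1) mod ?n = j"
    using j by (intro that[of "(j + ?n - 1) mod ?n"]) (simp_all add: mod_Suc_eq)
  show ?thesis
  proof (rule ex1I[of _ i])
    fix k assume k: "k < ?n \<and> Inr x \<in> {Inl (vs ! k), Inr (vs ! ((k + 1) mod ?n))}"
    with \<open>0 < ?n\<close> have "(k + 1) mod ?n < ?n" "vs ! ((k + 1) mod ?n) = vs ! j" using j by auto
    then have "(k + 1) mod ?n = (i + 1) mod ?n"
      using j i assms(1) by (simp add: nth_eq_iff_index_eq)
    then show "k = i" using k i(1) by (blast intro: mod_Suc_inj)
  qed (use i j in auto)
qed

lemma degree_star_edges: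
  assumes "simple_graph V E" "ham_cycle V E vs" "x \<in> V"
  shows "degree (star_edges E vs) (Inl x) = degree E x + 1"
    and "degree (star_edges E vs) (Inr x) = degree E x + 1"
proof -
  let ?M = "(\<lambda>i. {Inl (vs ! i), Inr (vs ! ((i + 1) mod length vs))}) ` {..<length vs}"
  have distinct: "distinct vs" and set_vs: "set vs = V"
    using assms(2) by (auto simp: ham_cycle_def)
  with assms(3) have x: "x \<in> set vs" by simp
  have "finite E" using assms(1) by (rule finite_edges_if_simple_graph)
  have star: "star_edges E vs = (`) Inl ` E \<union> (`) Inr ` E \<union> ?M"
    using assms(1) set_vs unfolding simple_graph_def by (intro star_edges_eq) blast
  have degree_star: "degree (star_edges E vs) v = degree ((`) Inl ` E) v + degree ((`) Inr ` E) v + degree ?M v"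
    for v
  proof -
    have "degree (star_edges E vs) v = degree ((`) Inl ` E \<union> (`) Inr ` E) v + degree ?M v"
      unfolding star using \<open>finite E\<close> by (intro degree_Un) auto
    also have "degree ((`) Inl ` E \<union> (`) Inr ` E) v = degree ((`) Inl ` E) v + degree ((`) Inr ` E) v"
      using \<open>finite E\<close> by (intro degree_Un) auto
    finally show ?thesis .
  qed
  have "degree ((`) Inr ` E) (Inl x) = 0" "degree ((`) Inl ` E) (Inr x) = 0"
    by (auto intro: degree_image_notin_range)
  then show "degree (star_edges E vs) (Inl x) = degree E x + 1"
    and "degree (star_edges E vs) (Inr x) = degree E x + 1"
    using unique_shift_edge_Inl[OF distinct x] unique_shift_edge_Inr[OF distinct x]
    by (simp_all add: degree_star degree_image_inj degree_image_unique)
qed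

lemma all_less_split_last:
  fixes n :: nat
  assumes "0 < n"
  shows "(\<forall>i < n. P i) \<longleftrightarrow> (\<forall>i. Suc i < n \<longrightarrow> P i) \<and> P (n - 1)"
proof
  assume "(\<forall>i. Suc i < n \<longrightarrow> P i) \<and> P (n - 1)"
  then show "\<forall>i < n. P i" by (metis Suc_lessI diff_Suc_1)
qed (use assms in simp)

lemma cyclic_iff_successively:
  assumes "us \<noteq> []"
  shows "(\<forall>i < length us. R (us ! i) (us ! ((i + 1) mod length us)))
    \<longleftrightarrow> successively R us \<and> R (last us) (hd us)"
proof -
  have "0 < length us" using assms by simp
  then show ?thesis
    using assms by (simp add: all_less_split_last successively_conv_nth last_conv_nth hd_conv_nth)
qed

lemma star_cycle_Cons_snoc:
  "star_cycle (a # ws @ [b]) = Inl b # Inr a # map Inr (rev (ws @ [b])) @ map Inl (a # ws)"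
proof -
  let ?vs = "a # ws @ [b]"
  have "map ((!) ?vs) [1..<length ?vs] = ws @ [b]"
    by (rule map_upt_eqI) (simp_all add: nth_append)
  moreover have "map ((!) ?vs) [0..<length ?vs - 1] = a # ws"
    by (rule map_upt_eqI) (simp_all add: nth_append flip: append_Cons)
  moreover have "star_cycle ?vs = [Inl (?vs ! (length ?vs - 1)), Inr (?vs ! 0)]
      @ map Inr (rev (map ((!) ?vs) [1..<length ?vs])) @ map Inl (map ((!) ?vs) [0..<length ?vs - 1])"
    unfolding star_cycle_def by (simp only: map_map rev_map comp_def)
  ultimately show ?thesis by (simp add: nth_append)
qed

lemma Inl_edge_in_star_edges: "{x, y} \<in> E \<Longrightarrow> {Inl x, Inl y} \<in> star_edges E vs"
proof -
  assume "{x, y} \<in> E"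
  moreover have "{Inl x, Inl y} = Inl ` {x, y}" by simp
  ultimately show ?thesis unfolding star_edges_def by blast
qed

lemma Inr_edge_in_star_edges:
  "{x, y} \<in> E \<Longrightarrow> x \<in> set vs \<Longrightarrow> y \<in> set vs \<Longrightarrow> {Inr x, Inr y} \<in> star_edges E vs"
  unfolding star_edges_def by (auto simp: in_set_conv_nth)

lemma shift_edge_in_star_edges:
  "i < length vs \<Longrightarrow> {Inl (vs ! i), Inr (vs ! ((i + 1) mod length vs))} \<in> star_edges E vs"
  unfolding star_edges_def by blast

lemma star_cycle_closed_walk:
  assumes "ham_cycle V E vs" "vs = a # ws @ [b]"
  shows "successively (\<lambda>x y. {x, y} \<in> star_edges E vs) (star_cycle vs)
    \<and> {last (star_cycle vs), hd (star_cycle vs)} \<in> star_edges E vs"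
proof -
  let ?R = "\<lambda>x y. {x, y} \<in> E" and ?S = "\<lambda>x y. {x, y} \<in> star_edges E vs"
  have path: "successively ?R vs" and closing_edge: "?R b a"
    using assms cyclic_iff_successively[of vs ?R] by (auto simp: ham_cycle_def)
  from path have path_init: "successively ?R (a # ws)" and last_edge: "?R (last (a # ws)) b"
    unfolding assms(2) append_Cons[symmetric] successively_append_iff by simp_all
  from path have path_tail: "successively ?R (ws @ [b])"
    unfolding assms(2) successively_Cons by simp
  have "vs \<noteq> []" by (simp add: assms(2))
  then have "successively (\<lambda>x y. ?S (Inl x) (Inr y)) vs \<and> ?S (Inl (last vs)) (Inr (hd vs))"
    using cyclic_iff_successively[of vs "\<lambda>x y. ?S (Inl x) (Inr y)"] shift_edge_in_star_edges
    by blast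
  then have shift_first: "?S (Inl a) (Inr (hd (ws @ [b])))" and shift_last: "?S (Inl b) (Inr a)"
    unfolding assms(2) by (simp_all add: successively_Cons)
  define P :: "('a + 'a) list" where "P = map Inr (rev (ws @ [b]))"
  define Q :: "('a + 'a) list" where "Q = map Inl (a # ws)"
  have "successively ?S Q"
    unfolding Q_def successively_map using path_init
    by (rule successively_mono) (rule Inl_edge_in_star_edges)
  moreover have "successively ?S P"
    unfolding P_def successively_map successively_rev using path_tail
  proof (rule successively_mono)
    fix x y assume "x \<in> set (ws @ [b])" "y \<in> set (ws @ [b])" "?R x y"
    then show "?S (Inr y) (Inr x)"
      using Inr_edge_in_star_edges[of y x] by (simp add: assms(2) insert_commute)
  qed
  moreover have "?S (Inr a) (hd P)"
    using closing_edge Inr_edge_in_star_edges[of a b] by (simp add: P_def assms(2) insert_commute)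
  moreover have "?S (last P) (hd Q)"
  proof -
    have "last P = Inr (hd (ws @ [b]))" by (cases ws) (simp_all add: P_def)
    then show ?thesis using shift_first by (simp add: Q_def insert_commute)
  qed
  moreover have "?S (last Q) (Inl b)"
    unfolding Q_def last_map[OF list.distinct(2)] using last_edge by (rule Inl_edge_in_star_edges)
  moreover have "star_cycle vs = Inl b # Inr a # P @ Q" "P \<noteq> []" "Q \<noteq> []"
    by (simp_all add: assms(2) star_cycle_Cons_snoc P_def Q_def)
  ultimately show ?thesis
    using shift_last by (simp add: successively_Cons successively_append_iff)
qed

lemma ham_cycle_star_cycle:
  assumes "ham_cycle V E vs" "length vs \<ge> 2"
  shows "ham_cycle (star_vertices vs) (star_edges E vs) (star_cycle vs)"
proof -
  obtain a us where "vs = a # us" "us \<noteq> []" using assms(2) by (cases vs) (auto simp: Suc_le_eq)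
  then obtain ws b where vs: "vs = a # ws @ [b]" by (metis rev_exhaust)
  have "distinct vs" using assms(1) by (simp add: ham_cycle_def)
  then have "distinct (star_cycle vs)" "set (star_cycle vs) = star_vertices vs"
    by (auto simp: vs star_cycle_Cons_snoc star_vertices_def distinct_map)
  moreover have "star_cycle vs \<noteq> []" by (simp add: star_cycle_def)
  ultimately show ?thesis
    using star_cycle_closed_walk[OF assms(1) vs]
      cyclic_iff_successively[of "star_cycle vs" "\<lambda>x y. {x, y} \<in> star_edges E vs"]
    unfolding ham_cycle_def by simp
qed

lemma regular_star_edges:
  assumes "simple_graph V E" "regular V E p" "ham_cycle V E vs"
  shows "regular (star_vertices vs) (star_edges E vs) (p + 1)"
  unfolding regular_def
proof
  fix v assume "v \<in> star_vertices vs"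
  moreover have "set vs = V" using assms(3) by (simp add: ham_cycle_def)
  ultimately obtain x where "x \<in> V" "v = Inl x \<or> v = Inr x"
    by (auto simp: star_vertices_def)
  then show "degree (star_edges E vs) v = p + 1"
    using degree_star_edges[OF assms(1,3)] assms(2) by (auto simp: regular_def)
qed

lemma three_colorable_pullback:
  assumes "three_colorable V E" "g ` W \<subseteq> V" "\<And>a b. {a, b} \<in> F \<Longrightarrow> {g a, g b} \<in> E"
  shows "three_colorable W F"
proof -
  obtain f :: "_ \<Rightarrow> nat" where "\<forall>v \<in> V. f v \<in> {1, 2, 3}" "\<forall>v w. {v, w} \<in> E \<longrightarrow> f v \<noteq> f w"
    using assms(1) by (auto simp: three_colorable_def)
  then have "(\<forall>a \<in> W. f (g a) \<in> {1, 2, 3}) \<and> (\<forall>a b. {a, b} \<in> F \<longrightarrow> f (g a) \<noteq> f (g b))"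
    using assms(2,3) by blast
  then show ?thesis unfolding three_colorable_def by (intro exI[of _ "f \<circ> g"]) simp
qed

lemma project_star_edge:
  assumes "ham_cycle V E vs" "e \<in> star_edges E vs"
  shows "case_sum id id ` e \<in> E"
  using assms unfolding ham_cycle_def star_edges_def by (auto simp: image_image)

lemma three_colorable_star_iff:
  assumes "ham_cycle V E vs"
  shows "three_colorable (star_vertices vs) (star_edges E vs) \<longleftrightarrow> three_colorable V E"
proof
  have set_vs: "set vs = V" using assms by (simp add: ham_cycle_def)
  show "three_colorable V E" if "three_colorable (star_vertices vs) (star_edges E vs)"
    using that by (rule three_colorable_pullback[where g = Inl])
      (auto simp: star_vertices_def set_vs intro: Inl_edge_in_star_edges)
  show "three_colorable (star_vertices vs) (star_edges E vs)" if "three_colorable V E"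
  proof (rule three_colorable_pullback[OF that, where g = "case_sum id id"])
    show "case_sum id id ` star_vertices vs \<subseteq> V"
      by (auto simp: star_vertices_def set_vs)
    show "{case_sum id id a, case_sum id id b} \<in> E" if "{a, b} \<in> star_edges E vs" for a b
      using project_star_edge[OF assms that] by simp
  qed
qed

theorem mainTheorem5:
  fixes V :: "'a set" and E :: "'a set set" and vs :: "'a list" and p :: nat
  assumes "p \<ge> 1"
    and "simple_graph V E"
    and "regular V E p"
    and "ham_cycle V E vs"
    and "card V \<ge> 3"
  shows "regular (star_vertices vs) (star_edges E vs) (p + 1)
       \<and> ham_cycle (star_vertices vs) (star_edges E vs) (star_cycle vs)
       \<and> (three_colorable (star_vertices vs) (star_edges E vs) \<longleftrightarrow> three_colorable V E)"
proof -
  have "length vs = card V"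
    using assms(4) distinct_card unfolding ham_cycle_def by metis
  then have "length vs \<ge> 2" using assms(5) by simp
  with assms(2-4) show ?thesis
    using regular_star_edges ham_cycle_star_cycle three_colorable_star_iff by blast
qed

end
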